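(* Let $\mathcal I$ be the set of all infinitely divisible real random variables $X$ with $E[X^2]<\infty$. For every $\varepsilon\in(0,\frac{\sqrt2}{2})$, $$\inf_{X\in\mathcal I}P\left\{|X-E[X]|\le \varepsilon\sqrt{\mathrm{Var}(X)}\right\}=0.$$
   Context: A real random variable is infinitely divisible if for every $n\ge1$ its distribution equals that of a sum of $n$ i.i.d. random variables. *)

theory Defs
  imports "HOL-Probability.Probability"
begin

text \<open>A real random variable is identified with its law, a probability measure on the
Borel sets of the real line.\<close>

definition inf_divisible :: "real measure \<Rightarrow> bool" where
  "inf_divisible M \<longleftrightarrow> prob_space M \<and> sets M = sets borel \<and>
     (\<forall>n::nat. n \<ge> 1 \<longrightarrow> (\<exists>N::real measure. prob_space N \<and> sets N = sets borel \<and>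
        distr (PiM {..<n} (\<lambda>_. N)) borel (\<lambda>\<omega>. \<Sum>i<n. \<omega> i) = M))"

end

theory Submission
  imports Defs
begin

text \<open>The Poisson law with parameter 1/2 is infinitely divisible, since by characteristic
functions it is the law of a sum of n i.i.d. Poisson variables with parameter 1/(2n). Its mean
and variance are both 1/2, so the event in question is that the variable lies within
\<open>\<epsilon> sqrt(1/2) < 1/2\<close> of 1/2. A natural number never does, hence the infimum is
attained with value 0.\<close>

lemma integral_measure_pmf_nat_sums:
  fixes q :: "nat pmf" and f :: "nat \<Rightarrow> 'b::{banach,second_countable_topology}"
  assumes "summable (\<lambda>k. pmf q k * norm (f k))"
  shows "integrable (measure_pmf q) f"
    and "(\<lambda>k. pmf q k *\<^sub>R f k) sums integral\<^sup>L (measure_pmf q) f"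
proof -
  have integrable: "integrable (count_space UNIV) (\<lambda>k. pmf q k *\<^sub>R f k)"
    using assms by (simp add: integrable_count_space_nat_iff)
  then show "integrable (measure_pmf q) f"
    unfolding measure_pmf_eq_density by (subst integrable_density) auto
  have "integral\<^sup>L (measure_pmf q) f = integral\<^sup>L (count_space UNIV) (\<lambda>k. pmf q k *\<^sub>R f k)"
    unfolding measure_pmf_eq_density by (subst integral_density) auto
  then show "(\<lambda>k. pmf q k *\<^sub>R f k) sums integral\<^sup>L (measure_pmf q) f"
    using sums_integral_count_space_nat[OF integrable] by simp
qed

lemma measure_distr_real_measure_pmf_eq_0:
  fixes q :: "nat pmf"
  assumes "A \<in> sets borel" and "\<And>k. real k \<notin> A"
  shows "measure (distr (measure_pmf q) borel real) A = 0"
proof -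
  have "real -` A \<inter> space (measure_pmf q) = {}"
    using assms(2) by auto
  then show ?thesis
    using assms(1) by (simp add: measure_distr)
qed

definition poisson_distribution :: "real \<Rightarrow> real measure" where
  "poisson_distribution r = distr (measure_pmf (poisson_pmf r)) borel real"

lemma real_distribution_poisson_distribution: "real_distribution (poisson_distribution r)"
  unfolding poisson_distribution_def real_distribution_def real_distribution_axioms_def
  by (auto intro!: prob_space.prob_space_distr measure_pmf.prob_space_axioms)

lemma integral_poisson_distribution:
  fixes g :: "real \<Rightarrow> 'b::{banach,second_countable_topology}"
  assumes "g \<in> borel_measurable borel"
  shows "integral\<^sup>L (poisson_distribution r) g =
           integral\<^sup>L (measure_pmf (poisson_pmf r)) (\<lambda>k. g (real k))"
    and "integrable (poisson_distribution r) g \<longleftrightarrow>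
           integrable (measure_pmf (poisson_pmf r)) (\<lambda>k. g (real k))"
  unfolding poisson_distribution_def using assms
  by (auto simp: integral_distr integrable_distr_eq)

lemma poisson_pmf_sums:
  assumes "r > 0"
  shows "(\<lambda>k. pmf (poisson_pmf r) k) sums 1"
proof -
  have "(\<lambda>k. r ^ k / fact k * exp (-r)) sums (exp r * exp (-r))"
    using exp_converges[of r] by (intro sums_mult2) (simp add: divide_inverse mult.commute)
  then show ?thesis
    using assms by (simp add: exp_minus)
qed

lemma pmf_poisson_Suc:
  assumes "r > 0"
  shows "real (Suc k) * pmf (poisson_pmf r) (Suc k) = r * pmf (poisson_pmf r) k"
  using assms by (simp add: field_simps del: of_nat_Suc)

lemma poisson_pmf_sums_shift:
  assumes "r > 0" and "(\<lambda>k. pmf (poisson_pmf r) k * g (Suc k)) sums s"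
  shows "(\<lambda>k. pmf (poisson_pmf r) k * real k * g k) sums (r * s)"
proof -
  have "(\<lambda>k. r * (pmf (poisson_pmf r) k * g (Suc k))) sums (r * s)"
    using assms(2) by (rule sums_mult)
  then have "(\<lambda>k. pmf (poisson_pmf r) (Suc k) * real (Suc k) * g (Suc k)) sums (r * s)"
    using pmf_poisson_Suc[OF assms(1)] by (simp add: mult.commute mult.left_commute)
  then show ?thesis
    by (subst (asm) sums_Suc_iff) simp
qed

lemma poisson_distribution_moments:
  assumes "r > 0"
  shows "integrable (poisson_distribution r) (\<lambda>x. x)"
    and "integral\<^sup>L (poisson_distribution r) (\<lambda>x. x) = r"
    and "integrable (poisson_distribution r) (\<lambda>x. x\<^sup>2)"
    and "integral\<^sup>L (poisson_distribution r) (\<lambda>x. x\<^sup>2) = r\<^sup>2 + r"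
proof -
  let ?p = "pmf (poisson_pmf r)"
  have sums1: "(\<lambda>k. ?p k * real k) sums r"
    using poisson_pmf_sums_shift[OF assms, of "\<lambda>_. 1" 1] poisson_pmf_sums[OF assms] by simp
  have "(\<lambda>k. ?p k * real (Suc k)) sums (r + 1)"
    using sums_add[OF sums1 poisson_pmf_sums[OF assms]] by (simp add: algebra_simps)
  then have sums2: "(\<lambda>k. ?p k * (real k)\<^sup>2) sums (r\<^sup>2 + r)"
    using poisson_pmf_sums_shift[OF assms, of real "r + 1"]
    by (simp add: power2_eq_square algebra_simps)
  have summable1: "summable (\<lambda>k. ?p k * norm (real k))"
    using sums1 by (simp add: sums_summable)
  have summable2: "summable (\<lambda>k. ?p k * norm ((real k)\<^sup>2))"
    using sums2 by (simp add: sums_summable)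
  show "integrable (poisson_distribution r) (\<lambda>x. x)"
    using integral_measure_pmf_nat_sums(1)[OF summable1]
    by (subst integral_poisson_distribution) auto
  show "integral\<^sup>L (poisson_distribution r) (\<lambda>x. x) = r"
    using integral_measure_pmf_nat_sums(2)[OF summable1] sums1 sums_unique2
    by (subst integral_poisson_distribution) auto
  show "integrable (poisson_distribution r) (\<lambda>x. x\<^sup>2)"
    using integral_measure_pmf_nat_sums(1)[OF summable2]
    by (subst integral_poisson_distribution) auto
  show "integral\<^sup>L (poisson_distribution r) (\<lambda>x. x\<^sup>2) = r\<^sup>2 + r"
    using integral_measure_pmf_nat_sums(2)[OF summable2] sums2 sums_unique2
    by (subst integral_poisson_distribution) auto
qed

lemma expectation_poisson_distribution:
  assumes "r > 0"
  shows "prob_space.expectation (poisson_distribution r) (\<lambda>x. x) = r"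
  by (rule poisson_distribution_moments(2)[OF assms])

lemma variance_poisson_distribution:
  assumes "r > 0"
  shows "prob_space.variance (poisson_distribution r) (\<lambda>x. x) = r"
proof -
  interpret real_distribution "poisson_distribution r"
    by (rule real_distribution_poisson_distribution)
  note moments = poisson_distribution_moments[OF assms]
  have "variance (\<lambda>x. x) = expectation (\<lambda>x. x\<^sup>2) - (expectation (\<lambda>x. x))\<^sup>2"
    by (rule variance_eq[OF moments(1) moments(3)])
  then show ?thesis
    by (simp only: moments(2) moments(4))
qed

lemma char_poisson_distribution:
  assumes "r > 0"
  shows "char (poisson_distribution r) t = exp (complex_of_real r * (iexp t - 1))"
proof -
  let ?p = "pmf (poisson_pmf r)"
  have "(\<lambda>k. ?p k *\<^sub>R iexp (t * real k)) sums
          integral\<^sup>L (measure_pmf (poisson_pmf r)) (\<lambda>k. iexp (t * real k))"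
    using poisson_pmf_sums[OF assms]
    by (intro integral_measure_pmf_nat_sums) (simp add: norm_exp_i_times sums_summable)
  then have char_sums: "(\<lambda>k. ?p k *\<^sub>R iexp (t * real k)) sums char (poisson_distribution r) t"
    unfolding char_def by (subst integral_poisson_distribution) auto
  have term_eq: "complex_of_real (exp (-r)) * ((complex_of_real r * iexp t) ^ k /\<^sub>R fact k) =
                 ?p k *\<^sub>R iexp (t * real k)" for k
  proof -
    have "iexp (t * real k) = iexp t ^ k"
      by (subst exp_of_nat_mult[symmetric]) (simp add: algebra_simps)
    then show ?thesis
      using assms by (simp add: scaleR_conv_of_real power_mult_distrib field_simps)
  qed
  have "(\<lambda>k. ?p k *\<^sub>R iexp (t * real k)) sums
          (complex_of_real (exp (-r)) * exp (complex_of_real r * iexp t))"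
    unfolding term_eq[symmetric] by (intro sums_mult exp_converges)
  then have "char (poisson_distribution r) t =
               complex_of_real (exp (-r)) * exp (complex_of_real r * iexp t)"
    using char_sums sums_unique2 by metis
  also have "\<dots> = exp (complex_of_real r * (iexp t - 1))"
    by (simp add: exp_of_real[symmetric] exp_add[symmetric] algebra_simps)
  finally show ?thesis .
qed

lemma borel_measurable_sum_PiM:
  assumes "sets N = sets borel"
  shows "(\<lambda>\<omega>. \<Sum>i<n. \<omega> i :: real) \<in> borel_measurable (PiM {..<n} (\<lambda>_. N))"
proof -
  have "(\<lambda>\<omega>. \<omega> i) \<in> borel_measurable (PiM {..<n} (\<lambda>_. N))" if "i < n" for i
    using measurable_component_singleton[of i "{..<n}" "\<lambda>_. N"] that assms
    by (simp add: measurable_def)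
  then show ?thesis
    by (intro borel_measurable_sum) auto
qed

lemma real_distribution_distr_sum_PiM:
  assumes "real_distribution N"
  shows "real_distribution (distr (PiM {..<n} (\<lambda>_. N)) borel (\<lambda>\<omega>. \<Sum>i<n. \<omega> i))"
proof -
  interpret N: real_distribution N by fact
  have "prob_space (PiM {..<n} (\<lambda>_. N))"
    by (intro prob_space_PiM) (simp add: N.prob_space_axioms)
  then show ?thesis
    unfolding real_distribution_def real_distribution_axioms_def
    using borel_measurable_sum_PiM[of N n]
    by (auto intro!: prob_space.prob_space_distr)
qed

lemma char_distr_sum_PiM:
  assumes "real_distribution N"
  shows "char (distr (PiM {..<n} (\<lambda>_. N)) borel (\<lambda>\<omega>. \<Sum>i<n. \<omega> i)) t = char N t ^ n"
proof -
  interpret N: real_distribution N by fact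
  interpret P: product_prob_space "\<lambda>_. N"
    by (intro product_prob_spaceI) (simp add: N.prob_space_axioms)
  have "char (distr (PiM {..<n} (\<lambda>_. N)) borel (\<lambda>\<omega>. \<Sum>i<n. \<omega> i)) t =
          integral\<^sup>L (PiM {..<n} (\<lambda>_. N)) (\<lambda>\<omega>. \<Prod>i<n. iexp (t * \<omega> i))"
    unfolding char_def using borel_measurable_sum_PiM[of N n]
    by (subst integral_distr) (auto simp: sum_distrib_left exp_sum[symmetric])
  also have "\<dots> = (\<Prod>i<n. integral\<^sup>L N (\<lambda>x. iexp (t * x)))"
    by (intro P.product_integral_prod N.integrable_const_bound[where B=1])
       (auto simp: norm_exp_i_times)
  also have "\<dots> = char N t ^ n"
    by (simp add: char_def)
  finally show ?thesis .
qed

lemma inf_divisible_poisson_distribution: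
  assumes "r > 0"
  shows "inf_divisible (poisson_distribution r)"
  unfolding inf_divisible_def
proof (intro conjI allI impI)
  interpret real_distribution "poisson_distribution r"
    by (rule real_distribution_poisson_distribution)
  show "prob_space (poisson_distribution r)" "sets (poisson_distribution r) = sets borel"
    by (simp_all add: prob_space_axioms)
  fix n :: nat
  assume "n \<ge> 1"
  let ?N = "poisson_distribution (r / real n)"
  have "r / real n > 0"
    using \<open>n \<ge> 1\<close> assms by simp
  have "char (distr (PiM {..<n} (\<lambda>_. ?N)) borel (\<lambda>\<omega>. \<Sum>i<n. \<omega> i)) t =
          char (poisson_distribution r) t" for t
  proof -
    have "of_nat n * (complex_of_real (r / real n) * (iexp t - 1)) =
            complex_of_real r * (iexp t - 1)"
      using \<open>n \<ge> 1\<close> by (simp add: field_simps)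
    then show ?thesis
      using assms \<open>r / real n > 0\<close>
      by (simp add: char_distr_sum_PiM real_distribution_poisson_distribution
          char_poisson_distribution exp_of_nat_mult[symmetric])
  qed
  then have "distr (PiM {..<n} (\<lambda>_. ?N)) borel (\<lambda>\<omega>. \<Sum>i<n. \<omega> i) = poisson_distribution r"
    by (intro Levy_uniqueness real_distribution_distr_sum_PiM
        real_distribution_poisson_distribution) auto
  moreover have "prob_space ?N" "sets ?N = sets borel"
    using real_distribution_poisson_distribution[of "r / real n"]
    by (auto simp: real_distribution_def real_distribution_axioms_def)
  ultimately show "\<exists>N::real measure. prob_space N \<and> sets N = sets borel \<and>
      distr (PiM {..<n} (\<lambda>_. N)) borel (\<lambda>\<omega>. \<Sum>i<n. \<omega> i) = poisson_distribution r"
    by blast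
qed

theorem proposition2p2:
  fixes \<epsilon> :: real
  assumes "0 < \<epsilon>" and "\<epsilon> < sqrt 2 / 2"
  shows "(INF M \<in> {M. inf_divisible M \<and> integrable M (\<lambda>x. x\<^sup>2)}.
            measure M {x. \<bar>x - prob_space.expectation M (\<lambda>x. x)\<bar>
                          \<le> \<epsilon> * sqrt (prob_space.variance M (\<lambda>x. x))}) = 0"
proof (rule cInf_eq_minimum)
  let ?P = "poisson_distribution (1/2)"
  let ?f = "\<lambda>M. measure M {x. \<bar>x - prob_space.expectation M (\<lambda>x. x)\<bar>
                          \<le> \<epsilon> * sqrt (prob_space.variance M (\<lambda>x. x))}"
  let ?A = "{M. inf_divisible M \<and> integrable M (\<lambda>x. x\<^sup>2)}"
  have sqrt_half: "sqrt (1/2) = sqrt 2 / 2"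
    by (rule real_sqrt_unique) (auto simp: power_divide)
  have "\<epsilon> * sqrt (1/2) < sqrt 2 / 2 * (sqrt 2 / 2)"
    unfolding sqrt_half using assms by (intro mult_strict_right_mono) auto
  then have radius: "\<epsilon> * sqrt (1/2) < 1/2"
    by (simp add: power2_eq_square[symmetric] power_divide)
  have "\<not> \<bar>real k - 1/2\<bar> \<le> \<epsilon> * sqrt (1/2)" for k
    using radius by (cases k) auto
  then have "measure ?P {x. \<bar>x - 1/2\<bar> \<le> \<epsilon> * sqrt (1/2)} = 0"
    unfolding poisson_distribution_def by (intro measure_distr_real_measure_pmf_eq_0) auto
  then have measure_zero: "?f ?P = 0"
    by (subst variance_poisson_distribution expectation_poisson_distribution, simp)+
  have member: "?P \<in> ?A"
    using inf_divisible_poisson_distribution[of "1/2"] poisson_distribution_moments(3)[of "1/2"]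
    by simp
  show "0 \<in> ?f ` ?A"
    by (rule rev_image_eqI[where f = ?f, OF member measure_zero[symmetric]])
qed auto

end
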